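(* For $m=1,\dots,d$, let $F_m$ be a cumulative distribution function with $F_m(x)=0$ for $x\le 0$, and let $k_m(r)=\int_0^\infty\max\{0,1-|r|/x\}\,dF_m(x)$. Define the tensor-product kernel $k(u)=\prod_{m=1}^d k_m(u_m)$ for $u=(u_1,\dots,u_d)\in\mathbb{R}^d$. Let $x_1,\dots,x_n\in\mathbb{R}^d$ and $K_{ij}=k(x_i-x_j)$. For each $l=1,\dots,D$, draw independently (across $l$ and $m$) $w^{(l)}_m\sim F_m$ and, conditionally on $w^{(l)}_m$, $b^{(l)}_m\sim\mathcal{U}(0,w^{(l)}_m)$; this defines a random grid on $\mathbb{R}^d$ whose bins are the boxes $\prod_{m=1}^d[b^{(l)}_m+j_m w^{(l)}_m,\,b^{(l)}_m+(j_m+1)w^{(l)}_m)$, $j_m\in\mathbb{Z}$. Let $\widetilde{K}^{(l)}_{ij}=1$ if $x_i$ and $x_j$ lie in the same bin of the $l$-th grid and $\widetilde{K}^{(l)}_{ij}=0$ otherwise. Then \[ E\Big[\tfrac{1}{D}\textstyle\sum_{l=1}^D\widetilde{K}^{(l)}\Big]=K,\qquad E\left[\Big\|\tfrac{1}{D}\textstyle\sum_{l=1}^D\widetilde{K}^{(l)}-K\Big\|_F^2\right]=\tfrac{1}{D}\Big(\textstyle\sum_{i,j=1}^n K_{ij}-\|K\|_F^2\Big). \]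
   Context: This is the random binning feature map: $z(x)$ is the indicator vector of the grid bin containing $x$, and $\widetilde{K}_{ij}=\langle z(x_i),z(x_j)\rangle$. $\|\cdot\|_F$ denotes the Frobenius norm. *)

theory Defs
  imports "HOL-Probability.Probability"
begin

text \<open>The one-dimensional kernel k_m(r) = int_0^infty max(0, 1 - |r|/x) dF_m(x),
  where the distribution F_m is given as a real probability measure (its cdf is F_m).\<close>
definition km :: "real measure \<Rightarrow> real \<Rightarrow> real" where
  "km F r = (\<integral>x. (if 0 < x then max 0 (1 - \<bar>r\<bar> / x) else 0) \<partial>F)"

definition tkernel :: "('d::finite \<Rightarrow> real measure) \<Rightarrow> real^'d \<Rightarrow> real" where
  "tkernel F u = (\<Prod>m\<in>UNIV. km (F m) (u $ m))"

definition wb_dist :: "real measure \<Rightarrow> (real \<times> real) measure" where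
  "wb_dist F = F \<bind> (\<lambda>w. distr (uniform_measure lborel {0<..<w}) borel (\<lambda>b. (w, b)))"

definition grid_bin :: "('d::finite \<Rightarrow> real) \<Rightarrow> ('d \<Rightarrow> real) \<Rightarrow> ('d \<Rightarrow> int) \<Rightarrow> (real^'d) set" where
  "grid_bin w b j = {y. \<forall>m. b m + of_int (j m) * w m \<le> y $ m \<and> y $ m < b m + (of_int (j m) + 1) * w m}"

definition same_bin :: "('d::finite \<Rightarrow> real) \<Rightarrow> ('d \<Rightarrow> real) \<Rightarrow> real^'d \<Rightarrow> real^'d \<Rightarrow> bool" where
  "same_bin w b x y = (\<exists>j. x \<in> grid_bin w b j \<and> y \<in> grid_bin w b j)"

definition grid_space :: "('d::finite \<Rightarrow> real measure) \<Rightarrow> nat \<Rightarrow> (nat \<times> 'd \<Rightarrow> real \<times> real) measure" where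
  "grid_space F D = (\<Pi>\<^sub>M lm\<in>{..<D} \<times> UNIV. wb_dist (F (snd lm)))"

definition Ktilde :: "(nat \<times> 'd::finite \<Rightarrow> real \<times> real) \<Rightarrow> nat \<Rightarrow> real^'d \<Rightarrow> real^'d \<Rightarrow> real" where
  "Ktilde \<omega> l x y = (if same_bin (\<lambda>m. fst (\<omega> (l, m))) (\<lambda>m. snd (\<omega> (l, m))) x y then 1 else 0)"

end

theory Submission
  imports Defs
begin

text \<open>For one coordinate of one grid, an offset b uniform on (0, w) puts s and t into the same cell
  with probability max 0 (1 - |s - t| / w); integrating over the width w ~ F_m gives k_m(s - t).
  The coordinates of a grid are independent, so the same-bin indicator of a grid is a Bernoulli
  variable with mean k(x_i - x_j), and the indicators of distinct grids are independent. The average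
  of D pairwise uncorrelated Bernoulli(p) variables has mean p and mean square error (p - p^2) / D;
  summing over the entries gives the Frobenius identity.\<close>

lemma (in prob_space) bernoulli_average_moments:
  fixes X :: "nat \<Rightarrow> 'a \<Rightarrow> real"
  assumes measurable: "\<And>l. l < D \<Longrightarrow> X l \<in> borel_measurable M"
    and indicator: "\<And>l \<omega>. X l \<omega> \<in> {0, 1}"
    and mean: "\<And>l. l < D \<Longrightarrow> expectation (X l) = p"
    and uncorrelated: "\<And>l l'. l < D \<Longrightarrow> l' < D \<Longrightarrow> l \<noteq> l' \<Longrightarrow> expectation (\<lambda>\<omega>. X l \<omega> * X l' \<omega>) = p\<^sup>2"
    and "0 < D"
  defines "A \<equiv> \<lambda>\<omega>. (1 / real D) * (\<Sum>l<D. X l \<omega>)"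
  shows "expectation A = p"
    and "integrable M (\<lambda>\<omega>. (A \<omega> - p)\<^sup>2)"
    and "expectation (\<lambda>\<omega>. (A \<omega> - p)\<^sup>2) = (1 / real D) * (p - p\<^sup>2)"
proof -
  have bounded: "\<bar>X l \<omega> * X l' \<omega>\<bar> \<le> 1" "\<bar>X l \<omega>\<bar> \<le> 1" for l l' \<omega>
    using indicator[of l \<omega>] indicator[of l' \<omega>] by auto
  have int: "integrable M (X l)" if "l < D" for l
    using measurable[OF that] bounded by (intro integrable_const_bound[where B=1]) auto
  have int2: "integrable M (\<lambda>\<omega>. X l \<omega> * X l' \<omega>)" if "l < D" "l' < D" for l l'
    using measurable that bounded by (intro integrable_const_bound[where B=1]) auto
  have second_moment: "expectation (\<lambda>\<omega>. X l \<omega> * X l' \<omega>) = p\<^sup>2 + of_bool (l = l') * (p - p\<^sup>2)"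
    if "l < D" "l' < D" for l l'
  proof (cases "l = l'")
    case True
    have "(\<lambda>\<omega>. X l \<omega> * X l \<omega>) = X l"
      using indicator[of l] by (auto intro!: ext)
    then show ?thesis
      using True mean[OF that(1)] by simp
  qed (use uncorrelated that in simp)
  have "integrable M A"
    unfolding A_def using int by (intro integrable_mult_right integrable_sum) auto
  have "expectation A = (1 / real D) * (\<Sum>l<D. expectation (X l))"
    unfolding A_def using int by simp
  also have "\<dots> = p"
    using \<open>0 < D\<close> by (simp add: mean)
  finally show mean_A: "expectation A = p" .
  define B where "B \<omega> = (\<Sum>l<D. \<Sum>l'<D. X l \<omega> * X l' \<omega>)" for \<omega>
  have "integrable M B"
    unfolding B_def by (auto intro!: int2 Bochner_Integration.integrable_sum)
  have square: "(A \<omega> - p)\<^sup>2 = (1 / real D)\<^sup>2 * B \<omega> - 2 * p * A \<omega> + p\<^sup>2" for \<omega>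
    unfolding A_def B_def by (simp add: power2_eq_square sum_product algebra_simps)
  then show "integrable M (\<lambda>\<omega>. (A \<omega> - p)\<^sup>2)"
    using \<open>integrable M A\<close> \<open>integrable M B\<close> by simp
  have "expectation B = (\<Sum>l<D. \<Sum>l'<D. expectation (\<lambda>\<omega>. X l \<omega> * X l' \<omega>))"
    unfolding B_def
    by (subst Bochner_Integration.integral_sum)
       (auto intro!: int2 sum.cong Bochner_Integration.integral_sum Bochner_Integration.integrable_sum)
  also have "\<dots> = (\<Sum>l<D. \<Sum>l'<D. p\<^sup>2 + of_bool (l = l') * (p - p\<^sup>2))"
    by (intro sum.cong refl) (simp add: second_moment)
  also have "\<dots> = real D * (real D * p\<^sup>2 + (p - p\<^sup>2))"
    by (simp add: sum.distrib)
  finally have mean_B: "expectation B = real D * (real D * p\<^sup>2 + (p - p\<^sup>2))" .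
  have "expectation (\<lambda>\<omega>. (A \<omega> - p)\<^sup>2) = (1 / real D)\<^sup>2 * expectation B - 2 * p * expectation A + p\<^sup>2"
    unfolding square using \<open>integrable M A\<close> \<open>integrable M B\<close> by (simp add: prob_space)
  also have "\<dots> = (1 / real D) * (p - p\<^sup>2)"
    unfolding mean_A mean_B using \<open>0 < D\<close> by (simp add: field_simps power2_eq_square)
  finally show "expectation (\<lambda>\<omega>. (A \<omega> - p)\<^sup>2) = (1 / real D) * (p - p\<^sup>2)" .
qed

lemma same_floor_offsets_normalized:
  fixes a r w :: real
  assumes "0 \<le> a" "a < w" "0 \<le> r" "r < w"
  shows "{b\<in>{0<..<w}. \<lfloor>(a - b) / w\<rfloor> = \<lfloor>(a + r - b) / w\<rfloor>}
    = (if a + r \<le> w then {0<..a} \<union> {a + r<..<w} else {a + r - w<..a})"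
proof -
  have "\<lfloor>(a - b) / w\<rfloor> = (if b \<le> a then 0 else -1)"
    and "\<lfloor>(a + r - b) / w\<rfloor> = (if b \<le> a + r - w then 1 else if b \<le> a + r then 0 else -1)"
    if "0 < b" "b < w" for b
    using that assms by (auto simp: floor_eq_iff field_simps)
  then show ?thesis
    using assms by (auto split: if_splits)
qed

lemma emeasure_same_floor_offsets_le:
  fixes s t w :: real
  assumes w: "0 < w" and "s \<le> t"
  shows "emeasure lborel {b\<in>{0<..<w}. \<lfloor>(s - b) / w\<rfloor> = \<lfloor>(t - b) / w\<rfloor>} = ennreal (max 0 (w - (t - s)))"
proof (cases "w \<le> t - s")
  case True
  have "\<lfloor>(s - b) / w\<rfloor> < \<lfloor>(t - b) / w\<rfloor>" for b
  proof -
    have "(s - b) / w + 1 = (s - b + w) / w"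
      using w by (simp add: field_simps)
    also have "\<dots> \<le> (t - b) / w"
      using True w by (intro divide_right_mono) auto
    finally show ?thesis by linarith
  qed
  then show ?thesis
    using True by (simp add: less_le)
next
  case False
  define q where "q = \<lfloor>s / w\<rfloor>"
  define a where "a = s - w * q"
  define r where "r = t - s"
  have "of_int q \<le> s / w" "s / w < of_int q + 1"
    unfolding q_def by linarith+
  then have a: "0 \<le> a" "a < w"
    unfolding a_def using w by (simp_all add: field_simps)
  have r: "0 \<le> r" "r < w"
    using assms False by (auto simp: r_def)
  have "\<lfloor>(s - b) / w\<rfloor> = \<lfloor>(a - b) / w\<rfloor> + q" "\<lfloor>(t - b) / w\<rfloor> = \<lfloor>(a + r - b) / w\<rfloor> + q" for b
    unfolding floor_add_int a_def r_def using w by (simp_all add: field_simps)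
  then have "{b\<in>{0<..<w}. \<lfloor>(s - b) / w\<rfloor> = \<lfloor>(t - b) / w\<rfloor>}
      = (if a + r \<le> w then {0<..a} \<union> {a + r<..<w} else {a + r - w<..a})"
    using same_floor_offsets_normalized[OF a r] by simp
  moreover have "emeasure lborel ({0<..a} \<union> {a + r<..<w}) = ennreal (w - r)" if "a + r \<le> w"
    using that a r by (subst plus_emeasure[symmetric]) (auto simp flip: ennreal_plus)
  ultimately show ?thesis
    using a r by (simp add: r_def)
qed

lemma emeasure_same_floor_offsets:
  fixes s t w :: real
  assumes "0 < w"
  shows "emeasure lborel {b\<in>{0<..<w}. \<lfloor>(s - b) / w\<rfloor> = \<lfloor>(t - b) / w\<rfloor>} = ennreal (max 0 (w - \<bar>s - t\<bar>))"
proof (cases "s \<le> t")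
  case True
  then show ?thesis
    using emeasure_same_floor_offsets_le[OF assms True] by simp
next
  case False
  then show ?thesis
    using emeasure_same_floor_offsets_le[OF assms, of t s] by (simp add: eq_commute)
qed

definition uniform_offset :: "real \<Rightarrow> (real \<times> real) measure" where
  "uniform_offset w = distr (uniform_measure lborel {0<..<w}) borel (\<lambda>b. (w, b))"

lemma wb_dist_eq_bind_uniform_offset: "wb_dist F = F \<bind> uniform_offset"
  unfolding wb_dist_def uniform_offset_def[abs_def] ..

lemma sets_uniform_offset [simp, measurable_cong]: "sets (uniform_offset w) = sets borel"
  by (simp add: uniform_offset_def)

lemma emeasure_uniform_offset:
  assumes "A \<in> sets borel"
  shows "emeasure (uniform_offset w) A
    = emeasure lborel (Pair w -` (A \<inter> {p. 0 < snd p \<and> snd p < fst p})) / ennreal (max 0 w)"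
proof -
  have "(\<lambda>b. (w, b)) -` A \<inter> space lborel \<in> sets lborel"
    using assms by measurable
  moreover have "{0<..<w} \<inter> (\<lambda>b. (w, b)) -` A = Pair w -` (A \<inter> {p. 0 < snd p \<and> snd p < fst p})"
    by auto
  moreover have "emeasure lborel {0<..<w} = ennreal (max 0 w)"
    by (cases "0 \<le> w") auto
  ultimately show ?thesis
    unfolding uniform_offset_def using assms
    by (simp add: emeasure_distr emeasure_uniform_measure)
qed

lemma prob_space_uniform_offset: "0 < w \<Longrightarrow> prob_space (uniform_offset w)"
  unfolding uniform_offset_def by (intro prob_space.prob_space_distr prob_space_uniform_measure) auto

lemma subprob_space_uniform_offset: "subprob_space (uniform_offset w)"
proof (rule subprob_spaceI)
  have "emeasure (uniform_offset w) (space (uniform_offset w))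
      = emeasure lborel {0<..<w} / emeasure lborel {0<..<w}"
    unfolding uniform_offset_def by (simp add: emeasure_distr emeasure_uniform_measure)
  also have "\<dots> \<le> 1"
    by (cases "0 < w") (auto simp: ennreal_divide_self)
  finally show "emeasure (uniform_offset w) (space (uniform_offset w)) \<le> 1" .
qed (simp add: uniform_offset_def)

lemma measurable_uniform_offset: "uniform_offset \<in> borel \<rightarrow>\<^sub>M subprob_algebra borel"
proof (rule measurable_subprob_algebra)
  fix A :: "(real \<times> real) set"
  assume A: "A \<in> sets borel"
  have "open {p::real \<times> real. 0 < snd p \<and> snd p < fst p}"
    by (intro open_Collect_conj open_Collect_less continuous_intros)
  then have "A \<inter> {p. 0 < snd p \<and> snd p < fst p} \<in> sets (borel \<Otimes>\<^sub>M borel)"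
    unfolding borel_prod using A by (auto intro: borel_open)
  then have "A \<inter> {p. 0 < snd p \<and> snd p < fst p} \<in> sets (borel \<Otimes>\<^sub>M lborel)"
    by (simp cong: sets_pair_measure_cong)
  then have "(\<lambda>w. emeasure lborel (Pair w -` (A \<inter> {p. 0 < snd p \<and> snd p < fst p})))
      \<in> borel_measurable borel"
    by (rule lborel.measurable_emeasure_Pair)
  then show "(\<lambda>w. emeasure (uniform_offset w) A) \<in> borel_measurable borel"
    unfolding emeasure_uniform_offset[OF A] by (rule borel_measurable_divide_ennreal) measurable
qed (auto intro: subprob_space_uniform_offset)

definition same_cell :: "real \<Rightarrow> real \<Rightarrow> real \<times> real \<Rightarrow> bool" where
  "same_cell s t p \<longleftrightarrow> 0 < fst p \<and> \<lfloor>(s - snd p) / fst p\<rfloor> = \<lfloor>(t - snd p) / fst p\<rfloor>"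

lemma pred_same_cell [measurable]: "Measurable.pred borel (same_cell s t)"
proof -
  have "Measurable.pred (borel \<Otimes>\<^sub>M borel) (same_cell s t)"
    unfolding same_cell_def by measurable
  then show ?thesis
    by (simp only: borel_prod)
qed

lemma nn_integral_same_cell_uniform_offset:
  "(\<integral>\<^sup>+p. ennreal (of_bool (same_cell s t p)) \<partial>uniform_offset w)
    = ennreal (if 0 < w then max 0 (1 - \<bar>s - t\<bar> / w) else 0)"
proof -
  have "(\<integral>\<^sup>+p. ennreal (of_bool (same_cell s t p)) \<partial>uniform_offset w)
      = (\<integral>\<^sup>+b. ennreal (of_bool (same_cell s t (w, b))) * indicator {0<..<w} b \<partial>lborel)
        / emeasure lborel {0<..<w}"
    unfolding uniform_offset_def
    by (simp add: nn_integral_distr nn_integral_uniform_measure)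
  also have "\<dots> = ennreal (if 0 < w then max 0 (1 - \<bar>s - t\<bar> / w) else 0)"
  proof (cases "0 < w")
    case True
    have "(\<integral>\<^sup>+b. ennreal (of_bool (same_cell s t (w, b))) * indicator {0<..<w} b \<partial>lborel)
        = (\<integral>\<^sup>+b. indicator {b\<in>{0<..<w}. \<lfloor>(s - b) / w\<rfloor> = \<lfloor>(t - b) / w\<rfloor>} b \<partial>lborel)"
      using True by (intro nn_integral_cong) (auto simp: same_cell_def indicator_def)
    also have "\<dots> = emeasure lborel {b\<in>{0<..<w}. \<lfloor>(s - b) / w\<rfloor> = \<lfloor>(t - b) / w\<rfloor>}"
      by (rule nn_integral_indicator) measurable
    also have "\<dots> = ennreal (max 0 (w - \<bar>s - t\<bar>))"
      by (rule emeasure_same_floor_offsets[OF True])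
    finally show ?thesis
      using True by (simp add: divide_ennreal max_def field_simps)
  qed (simp add: same_cell_def)
  finally show ?thesis .
qed

lemma sets_wb_dist: "real_distribution F \<Longrightarrow> sets (wb_dist F) = sets borel"
  unfolding wb_dist_eq_bind_uniform_offset
  by (rule sets_bind) (auto simp: real_distribution_def prob_space.not_empty)

lemma integral_same_cell_wb_dist:
  assumes "real_distribution F"
  shows "(\<integral>p. of_bool (same_cell s t p) \<partial>wb_dist F) = km F (s - t)"
proof -
  interpret real_distribution F by (rule assms)
  have kernel: "uniform_offset \<in> F \<rightarrow>\<^sub>M subprob_algebra borel"
    using measurable_uniform_offset by (simp cong: measurable_cong_sets)
  have "(\<integral>p. of_bool (same_cell s t p) \<partial>wb_dist F)
      = enn2real (\<integral>\<^sup>+p. ennreal (of_bool (same_cell s t p)) \<partial>wb_dist F)"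
    using sets_wb_dist[OF assms] by (intro integral_eq_nn_integral) (auto cong: measurable_cong_sets)
  also have "(\<integral>\<^sup>+p. ennreal (of_bool (same_cell s t p)) \<partial>wb_dist F)
      = (\<integral>\<^sup>+w. ennreal (if 0 < w then max 0 (1 - \<bar>s - t\<bar> / w) else 0) \<partial>F)"
    unfolding wb_dist_eq_bind_uniform_offset
    by (simp add: nn_integral_bind[OF _ kernel] nn_integral_same_cell_uniform_offset)
  also have "enn2real \<dots> = km F (s - t)"
    unfolding km_def by (intro integral_eq_nn_integral[symmetric]) auto
  finally show ?thesis .
qed

text \<open>For w \<le> 0, uniform_offset w is the zero measure; the hypothesis on the cdf makes the widths
  almost surely positive.\<close>
lemma prob_space_wb_dist:
  assumes "real_distribution F" and "cdf F 0 = 0"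
  shows "prob_space (wb_dist F)"
proof -
  interpret real_distribution F by (rule assms(1))
  have "{..0} \<in> null_sets F"
    using assms(2) by (simp add: cdf_def null_sets_def emeasure_eq_measure)
  then have "AE w in F. prob_space (uniform_offset w)"
    by (rule AE_I') (auto intro: prob_space_uniform_offset)
  moreover have "uniform_offset \<in> F \<rightarrow>\<^sub>M subprob_algebra borel"
    using measurable_uniform_offset by (simp cong: measurable_cong_sets)
  ultimately show ?thesis
    unfolding wb_dist_eq_bind_uniform_offset by (rule prob_space_bind)
qed

lemma mem_cell_iff:
  fixes b w z :: real and j :: int
  shows "(b + of_int j * w \<le> z \<and> z < b + (of_int j + 1) * w) \<longleftrightarrow> 0 < w \<and> j = \<lfloor>(z - b) / w\<rfloor>"
proof (cases "0 < w")
  case True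
  have "j = \<lfloor>(z - b) / w\<rfloor> \<longleftrightarrow> of_int j * w \<le> z - b \<and> z - b < (of_int j + 1) * w"
    using True by (simp add: eq_commute[of j] floor_eq_iff pos_le_divide_eq pos_divide_less_eq)
  with True show ?thesis by linarith
qed (auto simp: algebra_simps)

lemma same_bin_iff: "same_bin w b x y \<longleftrightarrow> (\<forall>m. same_cell (x $ m) (y $ m) (w m, b m))"
  unfolding same_bin_def grid_bin_def same_cell_def mem_cell_iff by auto

lemma prod_of_bool:
  "finite A \<Longrightarrow> (\<Prod>x\<in>A. of_bool (P x)) = (of_bool (\<forall>x\<in>A. P x) :: 'a::comm_semiring_1)"
  by (induction A rule: finite_induct) auto

lemma Ktilde_eq_prod: "Ktilde \<omega> l s t = (\<Prod>m\<in>UNIV. of_bool (same_cell (s $ m) (t $ m) (\<omega> (l, m))))"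
  unfolding Ktilde_def same_bin_iff by (simp add: prod_of_bool)

lemma product_prob_space_wb_dist:
  assumes "\<And>m. real_distribution (F m)" and "\<And>m. cdf (F m) 0 = 0"
  shows "product_prob_space (\<lambda>lm :: nat \<times> 'd. wb_dist (F (snd lm)))"
  using prob_space_wb_dist[OF assms]
  unfolding product_prob_space_def product_prob_space_axioms_def product_sigma_finite_def
  by (auto intro: prob_space_imp_sigma_finite)

lemma prob_space_grid_space:
  assumes "\<And>m. real_distribution (F m)" and "\<And>m. cdf (F m) 0 = 0"
  shows "prob_space (grid_space F D)"
  unfolding grid_space_def using prob_space_wb_dist[OF assms] by (intro prob_space_PiM)

lemma measurable_Ktilde:
  fixes F :: "'d::finite \<Rightarrow> real measure"
  assumes "\<And>m. real_distribution (F m)" and "l < D"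
  shows "(\<lambda>\<omega>. Ktilde \<omega> l s t) \<in> borel_measurable (grid_space F D)"
proof -
  have "(\<lambda>\<omega>. of_bool (same_cell (s $ m) (t $ m) (\<omega> (l, m))) :: real) \<in> borel_measurable (grid_space F D)"
    for m
  proof -
    have "Measurable.pred (wb_dist (F (snd (l, m)))) (same_cell (s $ m) (t $ m))"
      unfolding measurable_cong_sets[OF sets_wb_dist[OF assms(1)] refl] by measurable
    then show ?thesis
      unfolding grid_space_def using assms(2)
      by (intro measurable_compose[OF measurable_component_singleton]) auto
  qed
  then show ?thesis
    unfolding Ktilde_eq_prod by (intro borel_measurable_prod) auto
qed

lemma prod_Ktilde_eq_prod_coordinates:
  assumes "S \<subseteq> {..<D}"
  shows "(\<Prod>l\<in>S. Ktilde \<omega> l s t) = (\<Prod>lm\<in>{..<D} \<times> UNIV.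
    if fst lm \<in> S then of_bool (same_cell (s $ snd lm) (t $ snd lm) (\<omega> lm)) else 1)"
proof -
  have "(\<Prod>l\<in>S. Ktilde \<omega> l s t) = (\<Prod>l<D. if l \<in> S then Ktilde \<omega> l s t else 1)"
    using assms by (simp add: prod.If_cases Int_absorb1)
  also have "\<dots> = (\<Prod>l<D. \<Prod>m\<in>UNIV.
      if l \<in> S then of_bool (same_cell (s $ m) (t $ m) (\<omega> (l, m))) else 1)"
    unfolding Ktilde_eq_prod by (intro prod.cong) auto
  also have "\<dots> = (\<Prod>lm\<in>{..<D} \<times> UNIV.
      if fst lm \<in> S then of_bool (same_cell (s $ snd lm) (t $ snd lm) (\<omega> lm)) else 1)"
    by (simp only: prod.cartesian_product split_def prod.collapse)
  finally show ?thesis .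
qed

lemma integral_prod_Ktilde:
  fixes F :: "'d::finite \<Rightarrow> real measure"
  assumes F: "\<And>m. real_distribution (F m)" and c: "\<And>m. cdf (F m) 0 = 0" and S: "S \<subseteq> {..<D}"
  shows "(\<integral>\<omega>. (\<Prod>l\<in>S. Ktilde \<omega> l s t) \<partial>grid_space F D) = tkernel F (s - t) ^ card S"
proof -
  define M where "M lm = wb_dist (F (snd lm))" for lm :: "nat \<times> 'd"
  define f where "f lm p = (if fst lm \<in> S then of_bool (same_cell (s $ snd lm) (t $ snd lm) p) else 1 :: real)"
    for lm p
  interpret product_prob_space M
    unfolding M_def by (rule product_prob_space_wb_dist[OF F c])
  have "(\<Prod>l\<in>S. Ktilde \<omega> l s t) = (\<Prod>lm\<in>{..<D} \<times> UNIV. f lm (\<omega> lm))" for \<omega>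
    unfolding f_def by (rule prod_Ktilde_eq_prod_coordinates[OF S])
  then have "(\<integral>\<omega>. (\<Prod>l\<in>S. Ktilde \<omega> l s t) \<partial>grid_space F D)
      = (\<integral>\<omega>. (\<Prod>lm\<in>{..<D} \<times> UNIV. f lm (\<omega> lm)) \<partial>Pi\<^sub>M ({..<D} \<times> UNIV) M)"
    unfolding grid_space_def M_def by simp
  also have "\<dots> = (\<Prod>lm\<in>{..<D} \<times> UNIV. integral\<^sup>L (M lm) (f lm))"
  proof (rule product_integral_prod)
    fix lm
    have measurable: "f lm \<in> borel_measurable (M lm)"
      unfolding f_def M_def measurable_cong_sets[OF sets_wb_dist[OF F] refl] by measurable
    show "integrable (M lm) (f lm)"
      by (rule M.integrable_const_bound[where B=1, OF _ measurable]) (simp add: f_def)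
  qed simp
  also have "\<dots> = (\<Prod>l<D. \<Prod>m\<in>UNIV. integral\<^sup>L (M (l, m)) (f (l, m)))"
    by (simp add: prod.cartesian_product)
  also have "\<dots> = (\<Prod>l<D. if l \<in> S then tkernel F (s - t) else 1)"
  proof (intro prod.cong refl)
    fix l
    show "(\<Prod>m\<in>UNIV. integral\<^sup>L (M (l, m)) (f (l, m))) = (if l \<in> S then tkernel F (s - t) else 1)"
    proof (cases "l \<in> S")
      case True
      then have "f (l, m) = (\<lambda>p. of_bool (same_cell (s $ m) (t $ m) p))" for m
        by (simp add: f_def fun_eq_iff)
      with True show ?thesis
        by (simp add: M_def tkernel_def integral_same_cell_wb_dist[OF F])
    next
      case False
      then have "f (l, m) = (\<lambda>p. 1)" for m
        by (simp add: f_def fun_eq_iff)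
      with False show ?thesis
        by (simp add: M.prob_space)
    qed
  qed
  also have "\<dots> = tkernel F (s - t) ^ card S"
    using S by (simp add: prod.If_cases Int_absorb1)
  finally show ?thesis .
qed

lemma grid_average_moments:
  fixes F :: "'d::finite \<Rightarrow> real measure" and s t :: "real^'d"
  assumes F: "\<And>m. real_distribution (F m)" and c: "\<And>m. cdf (F m) 0 = 0" and "0 < D"
  defines "A \<equiv> \<lambda>\<omega>. (1 / real D) * (\<Sum>l<D. Ktilde \<omega> l s t)"
  shows "(\<integral>\<omega>. A \<omega> \<partial>grid_space F D) = tkernel F (s - t)"
    and "integrable (grid_space F D) (\<lambda>\<omega>. (A \<omega> - tkernel F (s - t))\<^sup>2)"
    and "(\<integral>\<omega>. (A \<omega> - tkernel F (s - t))\<^sup>2 \<partial>grid_space F D)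
      = (1 / real D) * (tkernel F (s - t) - (tkernel F (s - t))\<^sup>2)"
proof -
  interpret prob_space "grid_space F D"
    by (rule prob_space_grid_space[OF F c])
  have mean: "expectation (\<lambda>\<omega>. Ktilde \<omega> l s t) = tkernel F (s - t)" if "l < D" for l
  proof -
    have "{l} \<subseteq> {..<D}"
      using that by simp
    from integral_prod_Ktilde[OF F c this] show ?thesis
      by simp
  qed
  have uncorrelated: "expectation (\<lambda>\<omega>. Ktilde \<omega> l s t * Ktilde \<omega> l' s t) = (tkernel F (s - t))\<^sup>2"
    if "l < D" "l' < D" "l \<noteq> l'" for l l'
  proof -
    have "{l, l'} \<subseteq> {..<D}"
      using that by simp
    from integral_prod_Ktilde[OF F c this] show ?thesis
      using \<open>l \<noteq> l'\<close> by (simp add: power2_eq_square)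
  qed
  have "Ktilde \<omega> l s t \<in> {0, 1}" for \<omega> l
    by (simp add: Ktilde_def)
  from bernoulli_average_moments[OF measurable_Ktilde[OF F] this mean uncorrelated \<open>0 < D\<close>]
  show "expectation A = tkernel F (s - t)"
    and "integrable (grid_space F D) (\<lambda>\<omega>. (A \<omega> - tkernel F (s - t))\<^sup>2)"
    and "expectation (\<lambda>\<omega>. (A \<omega> - tkernel F (s - t))\<^sup>2)
      = (1 / real D) * (tkernel F (s - t) - (tkernel F (s - t))\<^sup>2)"
    unfolding A_def by simp_all
qed

theorem theorem7:
  fixes F :: "'d::finite \<Rightarrow> real measure" and x :: "nat \<Rightarrow> real^'d" and n D :: nat
  assumes "\<And>m. real_distribution (F m)"
    and "\<And>m t. t \<le> 0 \<Longrightarrow> cdf (F m) t = 0"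
    and "D > 0"
  defines "K \<equiv> \<lambda>i j. tkernel F (x i - x j)"
    and "Kbar \<equiv> \<lambda>\<omega> i j. (1 / real D) * (\<Sum>l<D. Ktilde \<omega> l (x i) (x j))"
  shows "(\<forall>i<n. \<forall>j<n. (\<integral>\<omega>. Kbar \<omega> i j \<partial>grid_space F D) = K i j)
    \<and> (\<integral>\<omega>. (\<Sum>i<n. \<Sum>j<n. (Kbar \<omega> i j - K i j)^2) \<partial>grid_space F D)
        = (1 / real D) * ((\<Sum>i<n. \<Sum>j<n. K i j) - (\<Sum>i<n. \<Sum>j<n. (K i j)^2))"
proof -
  have "\<And>m. cdf (F m) 0 = 0"
    using assms(2) by simp
  note moments = grid_average_moments[OF assms(1) this assms(3)]
  have mean: "(\<integral>\<omega>. Kbar \<omega> i j \<partial>grid_space F D) = K i j" for i j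
    unfolding Kbar_def K_def by (rule moments(1))
  have integrable: "integrable (grid_space F D) (\<lambda>\<omega>. (Kbar \<omega> i j - K i j)^2)" for i j
    unfolding Kbar_def K_def by (rule moments(2))
  have mean_square_error:
    "(\<integral>\<omega>. (Kbar \<omega> i j - K i j)^2 \<partial>grid_space F D) = (1 / real D) * (K i j - (K i j)^2)" for i j
    unfolding Kbar_def K_def by (rule moments(3))
  have "(\<integral>\<omega>. (\<Sum>i<n. \<Sum>j<n. (Kbar \<omega> i j - K i j)^2) \<partial>grid_space F D)
      = (\<Sum>i<n. \<Sum>j<n. \<integral>\<omega>. (Kbar \<omega> i j - K i j)^2 \<partial>grid_space F D)"
    by (subst Bochner_Integration.integral_sum)
       (auto intro!: integrable sum.cong Bochner_Integration.integral_sum Bochner_Integration.integrable_sum)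
  also have "\<dots> = (\<Sum>i<n. \<Sum>j<n. (1 / real D) * (K i j - (K i j)^2))"
    by (simp add: mean_square_error)
  also have "\<dots> = (1 / real D) * ((\<Sum>i<n. \<Sum>j<n. K i j) - (\<Sum>i<n. \<Sum>j<n. (K i j)^2))"
    by (simp only: sum_distrib_left sum_subtractf[symmetric] right_diff_distrib)
  finally show ?thesis
    using mean by simp
qed

end
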